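(* Let $\nu,\mu$ be strict partitions with $\mu\subseteq\nu$ and let $T$ be a semistandard shifted tableau of skew shape $\nu/\mu$. At any stage of the mixed rectification of $T$, if an entry $x$ has not yet moved, then every entry located southeast of $x$ is at least as large as $x$.
   Context: A strict partition $\theta=(\theta_1>\dots>\theta_k>0)$ is identified with its shifted Young diagram: row $i$ consists of the cells $(i,j)$ with $i\le j\le i+\theta_i-1$ (English convention, row 1 on top). For strict partitions $\mu\subseteq\nu$, the skew shape $\nu/\mu$ is the set of cells of $\nu$ not in $\mu$. A cell $(i,i)$ is diagonal. For a cell $\mathsf b=(i,j)$ write $\mathsf b^{\uparrow}=(i-1,j)$, $\mathsf b^{\leftarrow}=(i,j-1)$, $\mathsf b^{\downarrow}=(i+1,j)$, $\mathsf b^{\uparrow\leftarrow}=(i-1,j-1)$. Alphabet: for each positive integer $i$ there is a low letter $\underline{i}$ and a high letter $\overline{\imath}$, ordered $\underline1<\overline1<\underline2<\overline2<\cdots$. Raising means replacing $\underline i$ by $\overline\imath$; lowering the reverse. A semistandard (shifted) tableau of shape $\nu/\mu$ is a filling of the cells of $\nu/\mu$ with such letters so that rows weakly increase left to right, columns weakly increase top to bottom, no diagonal cell contains a low letter, each column contains at most one copy of each high letter, and each row contains at most one copy of each low letter. A tableau with holes additionally allows a symbol $\bullet$ (neither high nor low, allowed anywhere and repeatedly). Mixed rectification of $T$: place a $\bullet$ in every cell of the bottom row of $\mu$. Bullets are swapped with entries by mixed slides, and a bullet is deleted as soon as there is no entry of the tableau to its southeast. An entry $y$ in cell $\mathsf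 b$ is available if $\mathsf b^\uparrow$ or $\mathsf b^\leftarrow$ contains a $\bullet$. Available entries are ordered by the letter order, ties broken so that among equal low letters the northmost is least and among equal high letters the westmost is least. Let $y\in\mathsf b$ be the least available entry and apply the unique applicable slide from the first of the collections (R1)–(R6) in which some slide applies (a cell vacated by an entry receives a $\bullet$): (R1) if $\mathsf b^\uparrow,\mathsf b^\leftarrow,\mathsf b^{\uparrow\leftarrow}$ all contain $\bullet$, move $y$ to $\mathsf b^{\uparrow\leftarrow}$; or if $\mathsf b$ is diagonal and $\mathsf b^\uparrow,\mathsf b^{\uparrow\leftarrow}$ contain $\bullet$, move $y$ to $\mathsf b^{\uparrow\leftarrow}$. (R2) if $\mathsf b^{\uparrow\leftarrow}$ contains an entry $x$ and $\mathsf b^\uparrow,\mathsf b^\leftarrow$ contain $\bullet$: if $y$ is low and $x\ne y$, move $y$ to $\mathsf b^\uparrow$; if $y$ is high and $x\neq y$, move $y$ to $\mathsf b^\leftarrow$. (R3) if $\mathsf b^\leftarrow$ is diagonal, $\mathsf b^{\uparrow\leftarrow}$ and the cell left of it contain entries, $\mathsf b^\uparrow,\mathsf b^\leftarrow$ contain $\bullet$ and $y$ is low, raise $y$ and move it to $\mathsf b^\leftarrow$; or if $\mathsf b^{\uparrow\leftarrow}$ contains an entry, $\mathsf b^\uparrow,\mathsf b^\leftarrow$ contain $\bullet$ and $y$ is low, move $y$ to $\mathsf b^\leftarrow$; or in the same situation with $y$ high, move $y$ to $\mathsf b^\uparrow$. (R4) if $y=\underline k$, $\mathsf b^\leftarrow$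 is diagonal and contains $\bullet$, and the diagonal cell $\mathsf b^\downarrow$ contains $\overline k$: put $\overline k$ in $\mathsf b^\leftarrow$ and in $\mathsf b$, and $\bullet$ in $\mathsf b^\downarrow$. (R5) if $\mathsf b^\leftarrow$ is diagonal and contains $\bullet$ and $\mathsf b^\downarrow$ is a cell, raise $y$ and move it to $\mathsf b^\leftarrow$; or if $\mathsf b$ is diagonal, $y$ is high, $\mathsf b^\uparrow$ contains $\bullet$ and $\mathsf b^{\uparrow\leftarrow}$ contains an entry, lower $y$ and move it to $\mathsf b^\uparrow$. (R6) if $\mathsf b^\leftarrow$ contains $\bullet$, move $y$ to $\mathsf b^\leftarrow$; if $\mathsf b^\uparrow$ contains $\bullet$, move $y$ to $\mathsf b^\uparrow$. Repeat with the new least available entry until no entry is available; the result has some shape $\nu'/\mu'$. Then place bullets in the bottom row of $\mu'$ and repeat, until a tableau of straight shape is obtained. *)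

theory Defs
  imports Main
begin

text \<open>Low letter i and high letter i (i a positive integer), ordered
  Low 1 < High 1 < Low 2 < High 2 < ...\<close>

datatype letter = Low nat | High nat

fun letter_rank :: "letter \<Rightarrow> nat" where
  "letter_rank (Low i) = 2 * i"
| "letter_rank (High i) = 2 * i + 1"

fun letter_index :: "letter \<Rightarrow> nat" where
  "letter_index (Low i) = i"
| "letter_index (High i) = i"

fun is_low :: "letter \<Rightarrow> bool" where
  "is_low (Low _) = True"
| "is_low (High _) = False"

abbreviation is_high :: "letter \<Rightarrow> bool" where
  "is_high x \<equiv> \<not> is_low x"

fun raise_letter :: "letter \<Rightarrow> letter" where
  "raise_letter (Low i) = High i"
| "raise_letter (High i) = High i"

fun lower_letter :: "letter \<Rightarrow> letter" where
  "lower_letter (Low i) = Low i"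
| "lower_letter (High i) = Low i"

lemma letter_rank_inj: "letter_rank x = letter_rank y \<Longrightarrow> x = y"
  by (cases x; cases y; simp; presburger)

instantiation letter :: linorder
begin
definition less_eq_letter :: "letter \<Rightarrow> letter \<Rightarrow> bool" where
  "less_eq_letter x y \<longleftrightarrow> letter_rank x \<le> letter_rank y"
definition less_letter :: "letter \<Rightarrow> letter \<Rightarrow> bool" where
  "less_letter x y \<longleftrightarrow> letter_rank x < letter_rank y"
instance
  by standard (auto simp: less_eq_letter_def less_letter_def intro: letter_rank_inj)
end

type_synonym cell = "nat \<times> nat"  \<comment> \<open>(row, column), rows and columns start at 1\<close>

definition strict_partition :: "nat list \<Rightarrow> bool" where
  "strict_partition lam \<longleftrightarrow> sorted_wrt (>) lam \<and> (\<forall>x\<in>set lam. 0 < x)"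

definition shifted_diagram :: "nat list \<Rightarrow> cell set" where
  "shifted_diagram lam =
     {(i, j). 1 \<le> i \<and> i \<le> length lam \<and> i \<le> j \<and> j < i + lam ! (i - 1)}"

definition skew_shape :: "nat list \<Rightarrow> nat list \<Rightarrow> cell set" where
  "skew_shape nu mu = shifted_diagram nu - shifted_diagram mu"

definition diagonal :: "cell \<Rightarrow> bool" where
  "diagonal c \<longleftrightarrow> fst c = snd c"

definition up :: "cell \<Rightarrow> cell" where "up c = (fst c - 1, snd c)"
definition left :: "cell \<Rightarrow> cell" where "left c = (fst c, snd c - 1)"
definition down :: "cell \<Rightarrow> cell" where "down c = (fst c + 1, snd c)"
definition upleft :: "cell \<Rightarrow> cell" where "upleft c = (fst c - 1, snd c - 1)"

definition weakly_se :: "cell \<Rightarrow> cell \<Rightarrow> bool" where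
  "weakly_se c d \<longleftrightarrow> fst c \<le> fst d \<and> snd c \<le> snd d"

definition southeast_of :: "cell \<Rightarrow> cell \<Rightarrow> bool" where
  "southeast_of c d \<longleftrightarrow> weakly_se c d \<and> d \<noteq> c"

definition semistandard :: "nat list \<Rightarrow> nat list \<Rightarrow> (cell \<Rightarrow> letter) \<Rightarrow> bool" where
  "semistandard nu mu T \<longleftrightarrow>
     (\<forall>c\<in>skew_shape nu mu. 1 \<le> letter_index (T c)) \<and>
     (\<forall>c\<in>skew_shape nu mu. \<forall>d\<in>skew_shape nu mu.
        fst c = fst d \<and> snd c < snd d \<longrightarrow> T c \<le> T d) \<and>
     (\<forall>c\<in>skew_shape nu mu. \<forall>d\<in>skew_shape nu mu.
        snd c = snd d \<and> fst c < fst d \<longrightarrow> T c \<le> T d) \<and>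
     (\<forall>c\<in>skew_shape nu mu. diagonal c \<longrightarrow> \<not> is_low (T c)) \<and>
     (\<forall>c\<in>skew_shape nu mu. \<forall>d\<in>skew_shape nu mu.
        snd c = snd d \<and> c \<noteq> d \<and> T c = T d \<longrightarrow> \<not> is_high (T c)) \<and>
     (\<forall>c\<in>skew_shape nu mu. \<forall>d\<in>skew_shape nu mu.
        fst c = fst d \<and> c \<noteq> d \<and> T c = T d \<longrightarrow> \<not> is_low (T c))"

text \<open>Each cell of the plane holds: nothing (Emp), a cell of the current inner
  shape mu' not carrying a bullet (Inner), a bullet (Bul), or an entry of the
  tableau together with a flag recording whether that entry has already moved.\<close>

datatype content = Emp | Inner | Bul | Ent bool letter

type_synonym state = "cell \<Rightarrow> content"

definition is_ent :: "state \<Rightarrow> cell \<Rightarrow> bool" where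
  "is_ent S c \<longleftrightarrow> (\<exists>m l. S c = Ent m l)"

definition is_bul :: "state \<Rightarrow> cell \<Rightarrow> bool" where
  "is_bul S c \<longleftrightarrow> S c = Bul"

fun letter_of :: "content \<Rightarrow> letter" where
  "letter_of (Ent _ l) = l"
| "letter_of _ = Low 0"

definition available :: "state \<Rightarrow> cell \<Rightarrow> bool" where
  "available S b \<longleftrightarrow> is_ent S b \<and> (is_bul S (up b) \<or> is_bul S (left b))"

definition avail_le :: "state \<Rightarrow> cell \<Rightarrow> cell \<Rightarrow> bool" where
  "avail_le S c d \<longleftrightarrow>
     (let x = letter_of (S c); y = letter_of (S d) in
       x < y \<or> (x = y \<and> (is_low x \<longrightarrow> fst c \<le> fst d) \<and> (is_high x \<longrightarrow> snd c \<le> snd d)))"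

definition least_available :: "state \<Rightarrow> cell \<Rightarrow> bool" where
  "least_available S b \<longleftrightarrow> available S b \<and> (\<forall>d. available S d \<longrightarrow> avail_le S b d)"

definition move :: "state \<Rightarrow> cell \<Rightarrow> cell \<Rightarrow> letter \<Rightarrow> state" where
  "move S b c l = S(b := Bul, c := Ent True l)"

definition slide :: "state \<Rightarrow> cell \<Rightarrow> state" where
  "slide S b =
    (let y = letter_of (S b);
         bU = is_bul S (up b); bL = is_bul S (left b); bUL = is_bul S (upleft b);
         eUL = is_ent S (upleft b); x = letter_of (S (upleft b)) in
     if bU \<and> bL \<and> bUL then move S b (upleft b) y                          \<comment> \<open>R1\<close>
     else if diagonal b \<and> bU \<and> bUL then move S b (upleft b) y           \<comment> \<open>R1\<close>
     else if eUL \<and> bU \<and> bL \<and> is_low y \<and> x \<noteq> y then move S b (up b) y    \<comment> \<open>R2\<close>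
     else if eUL \<and> bU \<and> bL \<and> is_high y \<and> x \<noteq> y then move S b (left b) y \<comment> \<open>R2\<close>
     else if diagonal (left b) \<and> eUL \<and> is_ent S (left (upleft b)) \<and> bU \<and> bL \<and> is_low y
       then move S b (left b) (raise_letter y)                             \<comment> \<open>R3\<close>
     else if eUL \<and> bU \<and> bL \<and> is_low y then move S b (left b) y          \<comment> \<open>R3\<close>
     else if eUL \<and> bU \<and> bL \<and> is_high y then move S b (up b) y           \<comment> \<open>R3\<close>
     else if is_low y \<and> diagonal (left b) \<and> bL \<and> diagonal (down b) \<and>
             (\<exists>m. S (down b) = Ent m (High (letter_index y)))
       then S(left b := Ent True (High (letter_index y)),
              b := Ent True (High (letter_index y)),
              down b := Bul)                                               \<comment> \<open>R4\<close>
     else if diagonal (left b) \<and> bL \<and> (is_ent S (down b) \<or> is_bul S (down b))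
       then move S b (left b) (raise_letter y)                             \<comment> \<open>R5\<close>
     else if diagonal b \<and> is_high y \<and> bU \<and> eUL
       then move S b (up b) (lower_letter y)                               \<comment> \<open>R5\<close>
     else if bL then move S b (left b) y                                   \<comment> \<open>R6\<close>
     else if bU then move S b (up b) y                                     \<comment> \<open>R6\<close>
     else S)"

definition delete_bullets :: "state \<Rightarrow> state" where
  "delete_bullets S =
     (\<lambda>c. if S c = Bul \<and> \<not> (\<exists>d. weakly_se c d \<and> is_ent S d) then Emp else S c)"

definition slide_step :: "state \<Rightarrow> state \<Rightarrow> bool" where
  "slide_step S S' \<longleftrightarrow> (\<exists>b. least_available S b \<and> S' = delete_bullets (slide S b))"

text \<open>Start of a new round: no entry is available; the result has shape nu'/mu'
  (mu' = the Inner cells); bullets are placed in the bottom row of mu'.\<close>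
definition round_start :: "state \<Rightarrow> state \<Rightarrow> bool" where
  "round_start S S' \<longleftrightarrow>
     (\<forall>b. \<not> available S b) \<and>
     (\<exists>r. (\<exists>c. S c = Inner \<and> fst c = r) \<and> (\<forall>c. S c = Inner \<longrightarrow> fst c \<le> r) \<and>
          S' = delete_bullets
                 (\<lambda>c. if S c = Inner \<and> fst c = r then Bul
                      else if S c = Bul then Emp else S c))"

definition mr_step :: "state \<Rightarrow> state \<Rightarrow> bool" where
  "mr_step S S' \<longleftrightarrow> slide_step S S' \<or> round_start S S'"

definition mr_init :: "nat list \<Rightarrow> nat list \<Rightarrow> (cell \<Rightarrow> letter) \<Rightarrow> state" where
  "mr_init nu mu T =
     (\<lambda>c. if c \<in> skew_shape nu mu then Ent False (T c)
          else if c \<in> shifted_diagram mu then Inner else Emp)"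

definition mr_stage :: "nat list \<Rightarrow> nat list \<Rightarrow> (cell \<Rightarrow> letter) \<Rightarrow> state \<Rightarrow> bool" where
  "mr_stage nu mu T S \<longleftrightarrow> mr_step\<^sup>*\<^sup>* (mr_init nu mu T) S"

end

theory Submission
  imports Defs
begin

text \<open>The claim is one part of an invariant of the rectification. The other two parts:
  every unmoved entry still sits in its original cell of \<open>\<nu>/\<mu>\<close> with its original
  letter, and every entry has, weakly southeast of it, a cell of \<open>\<nu>/\<mu>\<close> whose original
  letter has the same index (entries only travel north and west, and slides change a letter
  only within its index). A slide moves an entry \<open>y\<close> north-west, so unmoved entries
  north-west of its target are north-west of its source, hence at most \<open>y\<close>. The one
  decreasing move lowers a high \<open>k\<close> to a low \<open>k\<close> while moving it up; an unmoved high
  \<open>k\<close> north-west of it would lie strictly above and weakly left of the index witness,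
  contradicting the column strictness of high letters in \<open>T\<close>.\<close>

lemma strict_partition_nth_gap:
  assumes "strict_partition lam" "i \<le> j" "j < length lam"
  shows "lam ! j + (j - i) \<le> lam ! i"
  using assms(2,3)
proof (induction j rule: dec_induct)
  case base
  then show ?case by simp
next
  case (step n)
  have "lam ! Suc n < lam ! n"
    using assms(1) step unfolding strict_partition_def
    by (metis Suc_lessD lessI sorted_wrt_nth_less)
  with step show ?case by simp
qed

lemma shifted_diagram_closed_north_west:
  assumes "strict_partition lam" "(a, b) \<in> shifted_diagram lam"
    and "1 \<le> a'" "a' \<le> a" "a' \<le> b'" "b' \<le> b"
  shows "(a', b') \<in> shifted_diagram lam"
proof -
  have a: "1 \<le> a" "a \<le> length lam" "b < a + lam ! (a - 1)"
    using assms(2) unfolding shifted_diagram_def by auto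
  have "lam ! (a - 1) + ((a - 1) - (a' - 1)) \<le> lam ! (a' - 1)"
    using strict_partition_nth_gap[OF assms(1), of "a' - 1" "a - 1"] assms a by auto
  then have "b' < a' + lam ! (a' - 1)" using a assms by linarith
  then show ?thesis using a assms unfolding shifted_diagram_def by auto
qed

lemma skew_shape_corner:
  assumes "strict_partition nu" "strict_partition mu"
    and "c \<in> skew_shape nu mu" "e \<in> skew_shape nu mu" "weakly_se c e"
  shows "(fst c, snd e) \<in> skew_shape nu mu"
proof -
  obtain r s p q where c: "c = (r, s)" and e: "e = (p, q)" by (cases c, cases e)
  have c_cell: "1 \<le> r" "r \<le> s" "(r, s) \<notin> shifted_diagram mu"
    using assms(3) c unfolding skew_shape_def shifted_diagram_def by auto
  have "(p, q) \<in> shifted_diagram nu" using assms(4) e unfolding skew_shape_def by auto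
  moreover have "r \<le> p" "s \<le> q" using assms(5) c e unfolding weakly_se_def by auto
  ultimately have "(r, q) \<in> shifted_diagram nu" "(r, q) \<notin> shifted_diagram mu"
    using shifted_diagram_closed_north_west[OF assms(1), of p q r q]
      shifted_diagram_closed_north_west[OF assms(2), of r q r s] c_cell by auto
  then show ?thesis using c e unfolding skew_shape_def by auto
qed

lemma semistandard_mono:
  assumes "strict_partition nu" "strict_partition mu" "semistandard nu mu T"
    and "c \<in> skew_shape nu mu" "e \<in> skew_shape nu mu" "weakly_se c e"
  shows "T c \<le> T e"
proof -
  let ?m = "(fst c, snd e)"
  have m: "?m \<in> skew_shape nu mu" using skew_shape_corner assms by blast
  have se: "fst c \<le> fst e" "snd c \<le> snd e" using assms(6) unfolding weakly_se_def by auto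
  have "T c \<le> T ?m"
  proof (cases "snd c = snd e")
    case True
    then show ?thesis by (metis order_refl prod.collapse)
  next
    case False
    then show ?thesis using assms(3,4) m se unfolding semistandard_def by force
  qed
  also have "T ?m \<le> T e"
  proof (cases "fst c = fst e")
    case True
    then show ?thesis by (metis order_refl prod.collapse)
  next
    case False
    then show ?thesis using assms(3,5) m se unfolding semistandard_def by force
  qed
  finally show ?thesis .
qed

lemma semistandard_High_index_less_below:
  assumes "strict_partition nu" "strict_partition mu" "semistandard nu mu T"
    and "c \<in> skew_shape nu mu" "e \<in> skew_shape nu mu" "fst c < fst e" "snd c \<le> snd e"
    and "T c = High k"
  shows "k < letter_index (T e)"
proof -
  let ?m = "(fst c, snd e)"
  have m: "?m \<in> skew_shape nu mu"
    using skew_shape_corner[OF assms(1,2,4,5)] assms(6,7) unfolding weakly_se_def by simp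
  have "T c \<le> T ?m" "T ?m \<le> T e"
    using semistandard_mono[OF assms(1-3)] assms(4-7) m unfolding weakly_se_def by auto
  moreover have "T ?m = T e \<longrightarrow> is_low (T ?m)"
    using assms(3,5,6) m unfolding semistandard_def by (metis fst_conv less_irrefl snd_conv)
  ultimately have "2 * k + 1 < letter_rank (T e)"
    using assms(8) unfolding less_eq_letter_def
    by (cases "T ?m"; cases "T e"; simp; presburger)
  then show ?thesis by (cases "T e") auto
qed

lemma raise_letter_ge: "y \<le> raise_letter y"
  by (cases y) (simp_all add: less_eq_letter_def)

lemma letter_index_raise_letter [simp]: "letter_index (raise_letter y) = letter_index y"
  by (cases y) simp_all

lemma letter_index_lower_letter [simp]: "letter_index (lower_letter y) = letter_index y"
  by (cases y) simp_all

lemma le_Low_if_less_High: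
  assumes "x \<le> High k" "x \<noteq> High k"
  shows "x \<le> Low k"
  using assms unfolding less_eq_letter_def by (cases x) auto

lemma weakly_se_trans: "weakly_se a b \<Longrightarrow> weakly_se b c \<Longrightarrow> weakly_se a c"
  unfolding weakly_se_def by auto

lemma weakly_se_neighbours:
  "weakly_se (up b) b" "weakly_se (left b) b" "weakly_se (upleft b) b"
  unfolding weakly_se_def up_def left_def upleft_def by auto

definition mr_invariant :: "nat list \<Rightarrow> nat list \<Rightarrow> (cell \<Rightarrow> letter) \<Rightarrow> state \<Rightarrow> bool" where
  "mr_invariant nu mu T S \<longleftrightarrow>
    (\<forall>c x. S c = Ent False x \<longrightarrow> c \<in> skew_shape nu mu \<and> x = T c) \<and>
    (\<forall>d m y. S d = Ent m y \<longrightarrow>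
       (\<exists>e\<in>skew_shape nu mu. weakly_se d e \<and> letter_index (T e) = letter_index y)) \<and>
    (\<forall>c d x m y. S c = Ent False x \<longrightarrow> southeast_of c d \<longrightarrow> S d = Ent m y \<longrightarrow> x \<le> y)"

lemma mr_invariantD:
  assumes "mr_invariant nu mu T S"
  shows mr_invariant_unmoved: "S c = Ent False x \<Longrightarrow> c \<in> skew_shape nu mu \<and> x = T c"
    and mr_invariant_index_witness: "S d = Ent m y \<Longrightarrow>
      \<exists>e\<in>skew_shape nu mu. weakly_se d e \<and> letter_index (T e) = letter_index y"
    and mr_invariant_le: "S c = Ent False x \<Longrightarrow> southeast_of c d \<Longrightarrow> S d = Ent m y \<Longrightarrow> x \<le> y"
  using assms unfolding mr_invariant_def by blast+

lemma mr_invariant_cong: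
  assumes "\<And>c m y. S' c = Ent m y \<longleftrightarrow> S c = Ent m y"
  shows "mr_invariant nu mu T S' = mr_invariant nu mu T S"
  unfolding mr_invariant_def using assms by simp

lemma delete_bullets_Ent_iff [simp]: "delete_bullets S c = Ent m y \<longleftrightarrow> S c = Ent m y"
  unfolding delete_bullets_def by auto

lemma mr_invariant_update:
  assumes inv: "mr_invariant nu mu T S"
    and unmoved: "\<And>c x. S' c = Ent False x \<Longrightarrow> S c = Ent False x"
    and source: "\<And>d m y'. S' d = Ent m y' \<Longrightarrow> S d \<noteq> Ent m y' \<Longrightarrow>
      \<exists>b m0 y. S b = Ent m0 y \<and> weakly_se d b \<and> letter_index y = letter_index y'"
    and bound: "\<And>c d x m y'. S' c = Ent False x \<Longrightarrow> southeast_of c d \<Longrightarrow>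
      S' d = Ent m y' \<Longrightarrow> S d \<noteq> Ent m y' \<Longrightarrow> x \<le> y'"
  shows "mr_invariant nu mu T S'"
proof -
  have "\<exists>e\<in>skew_shape nu mu. weakly_se d e \<and> letter_index (T e) = letter_index y'"
    if d: "S' d = Ent m y'" for d m y'
  proof (cases "S d = Ent m y'")
    case True
    then show ?thesis using mr_invariant_index_witness[OF inv] by blast
  next
    case False
    then obtain b m0 y where "S b = Ent m0 y" "weakly_se d b" "letter_index y = letter_index y'"
      using source[OF d] by blast
    then show ?thesis using mr_invariant_index_witness[OF inv] weakly_se_trans by metis
  qed
  moreover have "x \<le> y'"
    if "S' c = Ent False x" "southeast_of c d" "S' d = Ent m y'" for c d x m y'
    using that bound[OF that] mr_invariant_le[OF inv] unmoved by blast
  ultimately show ?thesis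
    unfolding mr_invariant_def using mr_invariant_unmoved[OF inv] unmoved by blast
qed

lemma mr_invariant_move:
  assumes inv: "mr_invariant nu mu T S" and b: "S b = Ent m0 y" and "weakly_se t b"
    and "letter_index l = letter_index y"
    and bound: "\<And>c x. S c = Ent False x \<Longrightarrow> southeast_of c t \<Longrightarrow> c \<noteq> b \<Longrightarrow> x \<le> l"
  shows "mr_invariant nu mu T (move S b t l)"
proof (rule mr_invariant_update[OF inv])
  show "S c = Ent False x" if "move S b t l c = Ent False x" for c x
    using that unfolding move_def by (auto split: if_splits)
  show "\<exists>b m0 y. S b = Ent m0 y \<and> weakly_se d b \<and> letter_index y = letter_index y'"
    if "move S b t l d = Ent m y'" "S d \<noteq> Ent m y'" for d m y'
  proof -
    have "d = t" "y' = l" using that unfolding move_def by (auto split: if_splits)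
    then show ?thesis using b assms(3,4) by metis
  qed
  show "x \<le> y'" if "move S b t l c = Ent False x" "southeast_of c d"
    "move S b t l d = Ent m y'" "S d \<noteq> Ent m y'" for c d x m y'
    using that bound unfolding move_def by (auto split: if_splits)
qed

lemma mr_invariant_move_increasing:
  assumes inv: "mr_invariant nu mu T S" and b: "S b = Ent m0 y" and t: "weakly_se t b"
    and "y \<le> l" "letter_index l = letter_index y"
  shows "mr_invariant nu mu T (move S b t l)"
proof (rule mr_invariant_move[OF inv b t assms(5)])
  fix c x assume "S c = Ent False x" "southeast_of c t" "c \<noteq> b"
  moreover from this have "southeast_of c b"
    using t weakly_se_trans unfolding southeast_of_def by blast
  ultimately show "x \<le> l" using mr_invariant_le[OF inv _ _ b] \<open>y \<le> l\<close> by fastforce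
qed

lemma mr_invariant_move_up_lowered:
  assumes "strict_partition nu" "strict_partition mu" "semistandard nu mu T"
    and inv: "mr_invariant nu mu T S" and b: "S b = Ent m0 y"
  shows "mr_invariant nu mu T (move S b (up b) (lower_letter y))"
proof (rule mr_invariant_move[OF inv b weakly_se_neighbours(1) letter_index_lower_letter])
  fix c x assume c: "S c = Ent False x" "southeast_of c (up b)" "c \<noteq> b"
  then have "southeast_of c b"
    using weakly_se_neighbours(1) weakly_se_trans unfolding southeast_of_def by blast
  then have "x \<le> y" using mr_invariant_le[OF inv c(1) _ b] by blast
  show "x \<le> lower_letter y"
  proof (cases y)
    case (Low k)
    then show ?thesis using \<open>x \<le> y\<close> by simp
  next
    case (High k)
    have c_orig: "c \<in> skew_shape nu mu" "x = T c" using mr_invariant_unmoved[OF inv c(1)] by auto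
    obtain e where e: "e \<in> skew_shape nu mu" "weakly_se b e" "letter_index (T e) = k"
      using mr_invariant_index_witness[OF inv b] High by auto
    have "1 \<le> fst c" using c_orig(1) unfolding skew_shape_def shifted_diagram_def by auto
    then have "fst c < fst e" "snd c \<le> snd e"
      using c(2) e(2) unfolding southeast_of_def weakly_se_def up_def by auto
    then have "x \<noteq> High k"
      using semistandard_High_index_less_below[OF assms(1-3) c_orig(1) e(1)] c_orig(2) e(3)
      by auto
    then show ?thesis using le_Low_if_less_High \<open>x \<le> y\<close> High by simp
  qed
qed

lemma mr_invariant_R4:
  assumes inv: "mr_invariant nu mu T S"
    and b: "S b = Ent m0 (Low k)" and "S (down b) = Ent m1 (High k)"
  shows "mr_invariant nu mu T
    (S(left b := Ent True (High k), b := Ent True (High k), down b := Bul))"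
    (is "mr_invariant nu mu T ?S'")
proof (rule mr_invariant_update[OF inv])
  show "S c = Ent False x" if "?S' c = Ent False x" for c x
    using that by (auto split: if_splits)
  show "\<exists>b m0 y. S b = Ent m0 y \<and> weakly_se d b \<and> letter_index y = letter_index y'"
    if "?S' d = Ent m y'" "S d \<noteq> Ent m y'" for d m y'
  proof -
    have "weakly_se d b" "letter_index y' = k"
      using that weakly_se_neighbours(2) by (auto simp: weakly_se_def split: if_splits)
    then show ?thesis using b by fastforce
  qed
  show "x \<le> y'" if c: "?S' c = Ent False x" and cd: "southeast_of c d"
    and d: "?S' d = Ent m y'" "S d \<noteq> Ent m y'" for c d x m y'
  proof -
    have "d = b \<or> d = left b" "y' = High k" using d by (auto split: if_splits)
    moreover have "c \<noteq> b" "S c = Ent False x" using c by (auto split: if_splits)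
    ultimately have "southeast_of c b"
      using cd weakly_se_trans weakly_se_neighbours(2) unfolding southeast_of_def by metis
    then have "x \<le> Low k" using mr_invariant_le[OF inv \<open>S c = Ent False x\<close> _ b] by blast
    then show "x \<le> y'" using \<open>y' = High k\<close> by (simp add: less_eq_letter_def)
  qed
qed

lemma if_cases: "(c \<Longrightarrow> P a) \<Longrightarrow> (\<not> c \<Longrightarrow> P b) \<Longrightarrow> P (if c then a else b)"
  by simp

lemma mr_invariant_slide:
  assumes "strict_partition nu" "strict_partition mu" "semistandard nu mu T"
    and inv: "mr_invariant nu mu T S" and b: "S b = Ent m0 y"
  shows "mr_invariant nu mu T (slide S b)"
proof -
  have unchanged: "mr_invariant nu mu T (move S b t y)"
    and raised: "mr_invariant nu mu T (move S b t (raise_letter y))"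
    if "t \<in> {up b, left b, upleft b}" for t
  proof -
    have "weakly_se t b" using that weakly_se_neighbours[of b] by auto
    then show "mr_invariant nu mu T (move S b t y)"
      and "mr_invariant nu mu T (move S b t (raise_letter y))"
      using mr_invariant_move_increasing[OF inv b] raise_letter_ge by simp_all
  qed
  have lowered: "mr_invariant nu mu T (move S b (up b) (lower_letter y))"
    by (rule mr_invariant_move_up_lowered[OF assms])
  have R4: "mr_invariant nu mu T (S(left b := Ent True (High (letter_index y)),
      b := Ent True (High (letter_index y)), down b := Bul))"
    if R4_applies: "is_low y" "\<exists>m. S (down b) = Ent m (High (letter_index y))"
  proof -
    obtain k m1 where "y = Low k" "S (down b) = Ent m1 (High k)"
      using R4_applies by (cases y) auto
    then show ?thesis using mr_invariant_R4[OF inv, of b] b by simp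
  qed
  show ?thesis
    unfolding slide_def Let_def b letter_of.simps
    by (intro if_cases[where P = "mr_invariant nu mu T"])
      (use unchanged raised lowered R4 inv in auto)
qed

lemma mr_invariant_init:
  assumes "strict_partition nu" "strict_partition mu" "semistandard nu mu T"
  shows "mr_invariant nu mu T (mr_init nu mu T)"
proof -
  have init_Ent: "mr_init nu mu T c = Ent m y \<longleftrightarrow> c \<in> skew_shape nu mu \<and> m = False \<and> y = T c"
    for c m y
    unfolding mr_init_def by auto
  have "weakly_se d d" for d by (simp add: weakly_se_def)
  then show ?thesis
    unfolding mr_invariant_def init_Ent southeast_of_def
    using semistandard_mono[OF assms] by blast
qed

lemma mr_invariant_step:
  assumes "strict_partition nu" "strict_partition mu" "semistandard nu mu T"
    and "mr_step S S'" and inv: "mr_invariant nu mu T S"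
  shows "mr_invariant nu mu T S'"
  using \<open>mr_step S S'\<close> unfolding mr_step_def
proof
  assume "slide_step S S'"
  then obtain b where b: "least_available S b" "S' = delete_bullets (slide S b)"
    unfolding slide_step_def by blast
  then obtain m0 y where "S b = Ent m0 y"
    unfolding least_available_def available_def is_ent_def by blast
  then have "mr_invariant nu mu T (slide S b)" by (rule mr_invariant_slide[OF assms(1-3) inv])
  then show ?thesis using b(2) mr_invariant_cong delete_bullets_Ent_iff by metis
next
  assume "round_start S S'"
  then have "S' c = Ent m y \<longleftrightarrow> S c = Ent m y" for c m y
    unfolding round_start_def by (auto split: if_splits)
  then show ?thesis using mr_invariant_cong inv by metis
qed

theorem lemma3p5:
  fixes nu mu :: "nat list" and T :: "cell \<Rightarrow> letter" and S :: state
    and c d :: cell and x y :: letter and m :: bool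
  assumes "strict_partition nu" and "strict_partition mu"
    and "shifted_diagram mu \<subseteq> shifted_diagram nu"
    and "semistandard nu mu T"
    and "mr_stage nu mu T S"
    and "S c = Ent False x"
    and "southeast_of c d"
    and "S d = Ent m y"
  shows "x \<le> y"
proof -
  have "mr_step\<^sup>*\<^sup>* (mr_init nu mu T) S" using assms(5) unfolding mr_stage_def .
  then have "mr_invariant nu mu T S"
  proof (induction rule: rtranclp_induct)
    case base
    show ?case using mr_invariant_init assms(1,2,4) by blast
  next
    case (step S1 S2)
    then show ?case using mr_invariant_step assms(1,2,4) by blast
  qed
  then show ?thesis using mr_invariant_le assms(6-8) by blast
qed

end
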